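(* For all $0\le T<S$ and $k\in\mathbb N_+$, $a(k,S)\le a(k,T)$.
   Context: Let $\lambda>0$ and let $N$ be a Poisson process with intensity $\lambda$, arrival times $0<\sigma_1<\sigma_2<\cdots$, and natural filtration $\mathcal F_t=\sigma(N_s:s\le t)$. Let $F:[0,\infty)\to[0,\infty)$ be strictly increasing and strictly convex with $F(0)=0$. For $k\in\{0,1,\dots\}$ let $\mathcal A_k$ be the set of $(\mathcal F_t)$-adapted, integer-valued, nonnegative, non-increasing processes $\xi$ with $\xi_0=k$ whose values change only at arrival times of $N$, and $v(k,T)=\inf_{\xi\in\mathcal A_k}\mathbb E[\sum_{i:\sigma_i\le T}F(\xi_{\sigma_i-}-\xi_{\sigma_i})+F(\xi_T)]$. For $k\in\mathbb N_+$, $a(k,T)$ is the smallest minimizer over $a\in\{1,\dots,k\}$ of $v(k-a,T)+F(a)$. *)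

theory Defs
  imports "HOL-Probability.Probability"
begin

definition strictly_convex_on :: "real set \<Rightarrow> (real \<Rightarrow> real) \<Rightarrow> bool" where
  "strictly_convex_on S f \<longleftrightarrow>
     (\<forall>x\<in>S. \<forall>y\<in>S. x \<noteq> y \<longrightarrow> (\<forall>t. 0 < t \<and> t < 1 \<longrightarrow>
        f ((1 - t) * x + t * y) < (1 - t) * f x + t * f y))"

text \<open>Canonical probability space of a Poisson process of intensity lam:
  a sample omega is the sequence of i.i.d. Exp(lam) inter-arrival times.\<close>
definition poisson_space :: "real \<Rightarrow> (nat \<Rightarrow> real) measure" where
  "poisson_space lam = PiM UNIV (\<lambda>_. density lborel (exponential_density lam))"

text \<open>The (i+1)-th arrival time sigma_(i+1) (0-indexed: arrival i).\<close>
definition arrival :: "nat \<Rightarrow> (nat \<Rightarrow> real) \<Rightarrow> real" where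
  "arrival i \<omega> = (\<Sum>j\<le>i. \<omega> j)"

text \<open>An admissible strategy is described by its jumps: d i omega is the amount
  sold at the arrival i (i.e. xi_(sigma_i-) - xi_(sigma_i)).  Adaptedness to the
  natural filtration of N means that d i depends only on the first i+1 arrival
  times, i.e. on the first i+1 inter-arrival times; xi stays nonnegative,
  i.e. the total sold never exceeds the initial inventory k.\<close>
definition admissible :: "real \<Rightarrow> nat \<Rightarrow> (nat \<Rightarrow> (nat \<Rightarrow> real) \<Rightarrow> nat) set" where
  "admissible lam k =
     {d. (\<forall>i. d i \<in> measurable (poisson_space lam) (count_space UNIV))
       \<and> (\<forall>i \<omega> \<omega>'. (\<forall>j\<le>i. \<omega> j = \<omega>' j) \<longrightarrow> d i \<omega> = d i \<omega>')
       \<and> (\<forall>\<omega> n. (\<Sum>i<n. d i \<omega>) \<le> k)}"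

text \<open>Realised cost up to horizon T: sum of F(jumps) over arrivals in [0,T]
  plus F(xi_T).  Only the (finitely many) nonzero jumps are summed, which is
  harmless since F 0 = 0.\<close>
definition cost :: "(real \<Rightarrow> real) \<Rightarrow> nat \<Rightarrow> real \<Rightarrow> (nat \<Rightarrow> (nat \<Rightarrow> real) \<Rightarrow> nat)
                     \<Rightarrow> (nat \<Rightarrow> real) \<Rightarrow> real" where
  "cost F k T d \<omega> =
     (let J = {i. arrival i \<omega> \<le> T \<and> d i \<omega> \<noteq> 0} in
       (\<Sum>i\<in>J. F (real (d i \<omega>))) + F (real (k - (\<Sum>i\<in>J. d i \<omega>))))"

definition v :: "real \<Rightarrow> (real \<Rightarrow> real) \<Rightarrow> nat \<Rightarrow> real \<Rightarrow> real" where
  "v lam F k T = Inf {integral\<^sup>L (poisson_space lam) (cost F k T d) | d. d \<in> admissible lam k}"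

definition a_opt :: "real \<Rightarrow> (real \<Rightarrow> real) \<Rightarrow> nat \<Rightarrow> real \<Rightarrow> nat" where
  "a_opt lam F k T = (LEAST a. a \<in> {1..k} \<and>
      (\<forall>b\<in>{1..k}. v lam F (k - a) T + F (real a) \<le> v lam F (k - b) T + F (real b)))"

end

theory Submission
  imports Defs
begin

(* The value function is submodular: for T \<le> S,
     v(m, T) + v(m + 1, S) \<le> v(m + 1, T) + v(m, S).
   Given strategies for inventory m + 1 with horizon T and inventory m with horizon S, follow them
   path by path until the first arrival before T at which the first has no more inventory left
   than the second, and exchange the remaining inventories there.  This yields strategies for
   (m, T) and (m + 1, S), and by convexity of F their costs add up to at most the original ones.
   Submodularity makes v(j, T) - v(j, S) nondecreasing in j, so the difference between the two
   objectives a \<mapsto> v(k - a, U) + F a for U = T and U = S is nonincreasing in a; hence the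
   smallest minimiser for S cannot exceed the smallest minimiser for T. *)

lemma strictly_convex_on_exchange:
  fixes F :: "real \<Rightarrow> real"
  assumes cvx: "strictly_convex_on S F" and "a \<in> S" "d \<in> S"
    and "a \<le> b" "b \<le> d" "a \<le> c" "c \<le> d" "a + d = b + c"
  shows "F b + F c \<le> F a + F d"
proof (cases "a = b \<or> b = d")
  case True
  then show ?thesis using assms by auto
next
  case False
  then have "a < b" "b < d" using assms by auto
  define t where "t = (b - a) / (d - a)"
  have t: "0 < t" "t < 1" using \<open>a < b\<close> \<open>b < d\<close> by (auto simp: t_def field_simps)
  have "t * (d - a) = b - a" using \<open>b < d\<close> \<open>a < b\<close> by (simp add: t_def)
  then have b: "b = (1 - t) * a + t * d" and c: "c = (1 - (1 - t)) * a + (1 - t) * d"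
    using \<open>a + d = b + c\<close> by (simp_all add: algebra_simps)
  have chord: "F ((1 - s) * a + s * d) < (1 - s) * F a + s * F d" if "0 < s" "s < 1" for s
    using cvx assms(2,3) that \<open>a < b\<close> \<open>b < d\<close> unfolding strictly_convex_on_def by force
  have "F b < (1 - t) * F a + t * F d" "F c < (1 - (1 - t)) * F a + (1 - t) * F d"
    unfolding b c using chord[of t] chord[of "1 - t"] t by auto
  then show ?thesis by (simp add: algebra_simps)
qed

lemma strictly_convex_on_exchange_nat:
  fixes F :: "real \<Rightarrow> real" and a b c d :: nat
  assumes "strictly_convex_on {0..} F"
    and "a \<le> b" "b \<le> d" "a \<le> c" "c \<le> d" "a + d = b + c"
  shows "F (real b) + F (real c) \<le> F (real a) + F (real d)"
proof (rule strictly_convex_on_exchange[OF assms(1)])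
  show "real a + real d = real b + real c" using assms(6) by (metis of_nat_add)
qed (use assms in auto)

lemma sum_lessThan_mono_nat: "n \<le> n' \<Longrightarrow> (\<Sum>j<n. (e :: nat \<Rightarrow> nat) j) \<le> (\<Sum>j<n'. e j)"
  by (rule sum_mono2) auto

lemma sum_lessThan_eq_if_zero_beyond:
  assumes "\<And>i. t \<le> i \<Longrightarrow> (e :: nat \<Rightarrow> nat) i = 0" "t \<le> n"
  shows "(\<Sum>j<n. e j) = (\<Sum>j<t. e j)"
  using assms(2)
proof (induction n rule: dec_induct)
  case (step n) then show ?case using assms(1)[of n] by simp
qed simp

lemma eventually_zero_if_sums_bounded:
  fixes f :: "nat \<Rightarrow> nat"
  assumes bounded: "\<And>n. (\<Sum>i<n. f i) \<le> k"
  obtains N where "\<And>i. N \<le> i \<Longrightarrow> f i = 0"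
proof -
  have "finite {i. f i \<noteq> 0}"
  proof (rule ccontr)
    assume "infinite {i. f i \<noteq> 0}"
    then obtain B where B: "finite B" "card B = Suc k" "B \<subseteq> {i. f i \<noteq> 0}"
      using infinite_arbitrarily_large by blast
    obtain n where n: "\<forall>x\<in>B. x < n" using B(1) finite_nat_set_iff_bounded by auto
    have "card B = (\<Sum>i\<in>B. 1)" by simp
    also have "\<dots> \<le> (\<Sum>i\<in>B. f i)" using B(3) by (intro sum_mono) auto
    also have "\<dots> \<le> (\<Sum>i<n. f i)" using n by (intro sum_mono2) auto
    also have "\<dots> \<le> k" by (rule bounded)
    finally show False using B(2) by simp
  qed
  then obtain N where "\<forall>i\<in>{i. f i \<noteq> 0}. i < N" using finite_nat_set_iff_bounded by auto
  then show ?thesis using that by (meson leD mem_Collect_eq)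
qed

lemma downclosed_initial_segment:
  fixes Q :: "nat \<Rightarrow> bool"
  assumes downclosed: "\<And>i j. j \<le> i \<Longrightarrow> Q i \<Longrightarrow> Q j"
  shows "\<exists>t\<le>n. \<forall>i<n. Q i \<longleftrightarrow> i < t"
proof (intro exI conjI allI impI)
  define t where "t = (LEAST i. i = n \<or> \<not> Q i)"
  show "t \<le> n" unfolding t_def by (rule Least_le) simp
  have t: "t = n \<or> \<not> Q t" unfolding t_def by (rule LeastI[of _ n]) simp
  fix i assume "i < n"
  show "Q i \<longleftrightarrow> i < t"
  proof
    assume "Q i"
    show "i < t"
    proof (rule ccontr)
      assume "\<not> i < t"
      then have "Q t" using downclosed[of t i] \<open>Q i\<close> by simp
      then show False using t \<open>i < n\<close> \<open>\<not> i < t\<close> by simp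
    qed
  next
    assume "i < t"
    then show "Q i" using not_less_Least[of i "\<lambda>i. i = n \<or> \<not> Q i"] \<open>i < n\<close> unfolding t_def by auto
  qed
qed

section \<open>Exchanging two sale schedules\<close>

definition remaining :: "nat \<Rightarrow> (nat \<Rightarrow> nat) \<Rightarrow> nat \<Rightarrow> nat" where
  "remaining k e n = k - (\<Sum>j<n. e j)"

definition schedule_cost :: "(real \<Rightarrow> real) \<Rightarrow> nat \<Rightarrow> nat \<Rightarrow> (nat \<Rightarrow> nat) \<Rightarrow> real" where
  "schedule_cost F k N e = (\<Sum>i<N. F (real (e i))) + F (real (remaining k e N))"

(* e1 sells an inventory of m + 1, only at indices satisfying P, and e2 an inventory of m.  Up to the
   first P-index c at which e1 has no more inventory left than e2, swap_small copies e2 on P and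
   swap_large copies e1 (and e2 outside P); at c the sales are split so that the two remaining
   inventories are exchanged, and from then on swap_small copies e1 and swap_large copies e2. *)
definition crossing :: "(nat \<Rightarrow> bool) \<Rightarrow> (nat \<Rightarrow> nat) \<Rightarrow> (nat \<Rightarrow> nat) \<Rightarrow> nat \<Rightarrow> nat \<Rightarrow> bool" where
  "crossing P e1 e2 m j \<longleftrightarrow> P j \<and> remaining (Suc m) e1 (Suc j) \<le> remaining m e2 (Suc j)"

definition swap_small :: "(nat \<Rightarrow> bool) \<Rightarrow> (nat \<Rightarrow> nat) \<Rightarrow> (nat \<Rightarrow> nat) \<Rightarrow> nat \<Rightarrow> nat \<Rightarrow> nat" where
  "swap_small P e1 e2 m i =
    (if \<exists>j<i. crossing P e1 e2 m j then e1 i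
     else if crossing P e1 e2 m i then remaining m e2 i - remaining (Suc m) e1 (Suc i)
     else if P i then e2 i else 0)"

definition swap_large :: "(nat \<Rightarrow> bool) \<Rightarrow> (nat \<Rightarrow> nat) \<Rightarrow> (nat \<Rightarrow> nat) \<Rightarrow> nat \<Rightarrow> nat \<Rightarrow> nat" where
  "swap_large P e1 e2 m i =
    (if \<exists>j<i. crossing P e1 e2 m j then e2 i
     else if crossing P e1 e2 m i then remaining (Suc m) e1 i - remaining m e2 (Suc i)
     else if P i then e1 i else e2 i)"

lemma remaining_cong: "(\<forall>j<n. e j = e' j) \<Longrightarrow> remaining k e n = remaining k e' n"
  unfolding remaining_def by (metis lessThan_iff sum.cong)

lemma crossing_cong:
  "\<forall>j\<le>i. P j = P' j \<and> e1 j = e1' j \<and> e2 j = e2' j \<Longrightarrow> crossing P e1 e2 m i = crossing P' e1' e2' m i"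
  unfolding crossing_def using remaining_cong[of "Suc i" e1 e1'] remaining_cong[of "Suc i" e2 e2'] by auto

lemma swap_small_cong:
  assumes "\<forall>j\<le>i. P j = P' j \<and> e1 j = e1' j \<and> e2 j = e2' j"
  shows "swap_small P e1 e2 m i = swap_small P' e1' e2' m i"
proof -
  have "crossing P e1 e2 m j = crossing P' e1' e2' m j" if "j \<le> i" for j
    using assms that by (intro crossing_cong) auto
  moreover have "remaining m e2 i = remaining m e2' i"
    "remaining (Suc m) e1 (Suc i) = remaining (Suc m) e1' (Suc i)"
    using assms by (auto intro!: remaining_cong)
  ultimately show ?thesis unfolding swap_small_def using assms by (simp cong: conj_cong ex_cong1)
qed

lemma swap_large_cong:
  assumes "\<forall>j\<le>i. P j = P' j \<and> e1 j = e1' j \<and> e2 j = e2' j"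
  shows "swap_large P e1 e2 m i = swap_large P' e1' e2' m i"
proof -
  have "crossing P e1 e2 m j = crossing P' e1' e2' m j" if "j \<le> i" for j
    using assms that by (intro crossing_cong) auto
  moreover have "remaining (Suc m) e1 i = remaining (Suc m) e1' i"
    "remaining m e2 (Suc i) = remaining m e2' (Suc i)"
    using assms by (auto intro!: remaining_cong)
  ultimately show ?thesis unfolding swap_large_def using assms by (simp cong: conj_cong ex_cong1)
qed

(* In the application P i means that the i-th arrival is before T, and N bounds both supports. *)
context
  fixes m t N :: nat and P :: "nat \<Rightarrow> bool" and e1 e2 :: "nat \<Rightarrow> nat"
  assumes P_iff: "\<And>i. i < N \<Longrightarrow> P i \<longleftrightarrow> i < t" and t_le_N: "t \<le> N"
    and e1_eq_0: "\<And>i. \<not> P i \<or> N \<le> i \<Longrightarrow> e1 i = 0"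
    and e2_eq_0: "\<And>i. N \<le> i \<Longrightarrow> e2 i = 0"
    and e1_budget: "\<And>n. (\<Sum>j<n. e1 j) \<le> Suc m"
    and e2_budget: "\<And>n. (\<Sum>j<n. e2 j) \<le> m"
begin

lemma e1_eq_0_beyond: "t \<le> i \<Longrightarrow> e1 i = 0"
  using P_iff[of i] e1_eq_0[of i] by (cases "i < N") auto

lemma sum_e1_eq_beyond: "t \<le> n \<Longrightarrow> (\<Sum>j<n. e1 j) = (\<Sum>j<t. e1 j)"
  by (rule sum_lessThan_eq_if_zero_beyond) (auto simp: e1_eq_0_beyond)

lemma remaining_less_before_crossing:
  assumes "n \<le> t" "\<forall>j<n. \<not> crossing P e1 e2 m j"
  shows "remaining m e2 n < remaining (Suc m) e1 n"
proof (cases n)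
  case 0 then show ?thesis by (simp add: remaining_def)
next
  case (Suc k)
  have "P k" using P_iff[of k] assms t_le_N Suc by auto
  with assms Suc show ?thesis by (auto simp: crossing_def)
qed

lemma crossing_cases:
  obtains c where "crossing P e1 e2 m c" "\<forall>j<c. \<not> crossing P e1 e2 m j"
  | "\<forall>j<t. \<not> crossing P e1 e2 m j"
  by (metis exists_least_iff)

context
  assumes no_crossing_before: "\<forall>j<t. \<not> crossing P e1 e2 m j"
begin

lemma no_crossing: "\<not> crossing P e1 e2 m j"
proof (cases "j < t")
  case True then show ?thesis using no_crossing_before by auto
next
  case False
  have "remaining m e2 t < remaining (Suc m) e1 t"
    using remaining_less_before_crossing[of t] no_crossing_before by auto
  moreover have "remaining (Suc m) e1 (Suc j) = remaining (Suc m) e1 t"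
    using False sum_e1_eq_beyond[of "Suc j"] by (simp add: remaining_def)
  moreover have "remaining m e2 (Suc j) \<le> remaining m e2 t"
    using sum_lessThan_mono_nat[of t "Suc j" e2] False by (simp add: remaining_def)
  ultimately show ?thesis by (auto simp: crossing_def)
qed

lemma swap_small_no_crossing: "swap_small P e1 e2 m i = (if P i then e2 i else 0)"
  using no_crossing by (auto simp: swap_small_def)

lemma swap_large_no_crossing: "swap_large P e1 e2 m i = (if P i then e1 i else e2 i)"
  using no_crossing by (auto simp: swap_large_def)

lemma sum_e1_le_sum_e2_no_crossing: "(\<Sum>j<t. e1 j) \<le> (\<Sum>j<t. e2 j)"
proof -
  have "remaining m e2 t < remaining (Suc m) e1 t"
    using remaining_less_before_crossing[of t] no_crossing_before by auto
  then show ?thesis using e1_budget[of t] e2_budget[of t] by (simp add: remaining_def)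
qed

lemma sum_swap_small_no_crossing: "(\<Sum>i<n. swap_small P e1 e2 m i) = (\<Sum>j<min n t. e2 j)"
proof (induction n)
  case (Suc n)
  show ?case
  proof (cases "n < t")
    case True
    then have "P n" using P_iff[of n] t_le_N by auto
    then show ?thesis using Suc True by (simp add: swap_small_no_crossing min_def)
  next
    case False
    have "(if P n then e2 n else 0) = 0" using P_iff[of n] e2_eq_0[of n] False by (cases "n < N") auto
    then show ?thesis using Suc False by (simp add: swap_small_no_crossing min_def)
  qed
qed simp

lemma sum_swap_large_no_crossing:
  "(\<Sum>i<n. swap_large P e1 e2 m i) = (\<Sum>j<min n t. e1 j) + ((\<Sum>j<n. e2 j) - (\<Sum>j<min n t. e2 j))"
proof (induction n)
  case (Suc n)
  show ?case
  proof (cases "n < t")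
    case True
    then have "P n" using P_iff[of n] t_le_N by auto
    then show ?thesis using Suc True by (simp add: swap_large_no_crossing min_def)
  next
    case False
    have "(if P n then e1 n else e2 n) = e2 n"
      using e1_eq_0_beyond[of n] False P_iff[of n] e2_eq_0[of n] by (cases "n < N") auto
    moreover have "(\<Sum>j<t. e2 j) \<le> (\<Sum>j<n. e2 j)" using False by (intro sum_lessThan_mono_nat) auto
    ultimately show ?thesis using Suc False by (simp add: swap_large_no_crossing min_def add.assoc)
  qed
qed simp

end

context
  fixes c :: nat
  assumes crossing_at: "crossing P e1 e2 m c"
    and no_crossing_before: "\<forall>j<c. \<not> crossing P e1 e2 m j"
begin

lemma first_crossing_less: "c < t"
  using crossing_at no_crossing_before no_crossing by (metis linorder_not_less order_less_le_trans)

lemma swap_small_crossing: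
  "swap_small P e1 e2 m i =
    (if i < c then e2 i else if i = c then remaining m e2 c - remaining (Suc m) e1 (Suc c) else e1 i)"
proof (cases "i < c")
  case True
  then have "P i" using P_iff[of i] first_crossing_less t_le_N by auto
  then show ?thesis using True no_crossing_before by (auto simp: swap_small_def)
qed (use crossing_at no_crossing_before in \<open>auto simp: swap_small_def\<close>)

lemma swap_large_crossing:
  "swap_large P e1 e2 m i =
    (if i < c then e1 i else if i = c then remaining (Suc m) e1 c - remaining m e2 (Suc c) else e2 i)"
proof (cases "i < c")
  case True
  then have "P i" using P_iff[of i] first_crossing_less t_le_N by auto
  then show ?thesis using True no_crossing_before by (auto simp: swap_large_def)
qed (use crossing_at no_crossing_before in \<open>auto simp: swap_large_def\<close>)

lemma first_crossing_remaining:
  "Suc m - (\<Sum>j<Suc c. e1 j) \<le> m - (\<Sum>j<Suc c. e2 j)"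
  "m - (\<Sum>j<c. e2 j) < Suc m - (\<Sum>j<c. e1 j)"
  using crossing_at remaining_less_before_crossing[of c] first_crossing_less no_crossing_before
  by (simp_all add: crossing_def remaining_def)

lemma sum_swap_small_crossing:
  "(\<Sum>i<n. swap_small P e1 e2 m i) = (if n \<le> c then (\<Sum>j<n. e2 j) else (\<Sum>j<n. e1 j) - 1)"
proof (induction n)
  case (Suc n)
  have budgets: "(\<Sum>j<Suc c. e1 j) \<le> Suc m" "(\<Sum>j<c. e2 j) \<le> m" by (rule e1_budget, rule e2_budget)
  consider "n < c" | "n = c" | "c < n" by linarith
  then show ?case
  proof cases
    case 3
    then have "(\<Sum>j<Suc c. e1 j) \<le> (\<Sum>j<n. e1 j)" by (intro sum_lessThan_mono_nat) auto
    then show ?thesis using Suc budgets first_crossing_remaining 3 by (simp add: swap_small_crossing)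
  qed (use Suc budgets first_crossing_remaining in \<open>simp_all add: swap_small_crossing remaining_def\<close>)
qed simp

lemma sum_swap_large_crossing:
  "(\<Sum>i<n. swap_large P e1 e2 m i) = (if n \<le> c then (\<Sum>j<n. e1 j) else (\<Sum>j<n. e2 j) + 1)"
proof (induction n)
  case (Suc n)
  have budgets: "(\<Sum>j<c. e1 j) \<le> Suc m" "(\<Sum>j<Suc c. e2 j) \<le> m" by (rule e1_budget, rule e2_budget)
  consider "n < c" | "n = c" | "c < n" by linarith
  then show ?case
    by cases (use Suc budgets first_crossing_remaining in \<open>simp_all add: swap_large_crossing remaining_def\<close>)
qed simp

end

lemma swap_small_eq_0_beyond:
  assumes "N \<le> i" shows "swap_small P e1 e2 m i = 0"
proof (cases rule: crossing_cases)
  case (1 c)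
  then show ?thesis using first_crossing_less[OF 1] t_le_N assms e1_eq_0[of i] swap_small_crossing[OF 1] by simp
next
  case 2
  then show ?thesis using assms e2_eq_0[of i] swap_small_no_crossing[OF 2] by simp
qed

lemma swap_large_eq_0_beyond:
  assumes "N \<le> i" shows "swap_large P e1 e2 m i = 0"
proof (cases rule: crossing_cases)
  case (1 c)
  then show ?thesis using first_crossing_less[OF 1] t_le_N assms e2_eq_0[of i] swap_large_crossing[OF 1] by simp
next
  case 2
  then show ?thesis using e1_eq_0[of i] assms e2_eq_0[of i] swap_large_no_crossing[OF 2] by simp
qed

lemma swap_small_nonzero_imp:
  assumes "swap_small P e1 e2 m i \<noteq> 0" shows "P i"
proof (cases rule: crossing_cases)
  case (1 c)
  note first = this
  consider "i < c" | "i = c" | "c < i" by linarith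
  then show ?thesis
  proof cases
    case 1
    then show ?thesis using first_crossing_less[OF first] t_le_N P_iff[of i] by auto
  next
    case 2
    then show ?thesis using first by (simp add: crossing_def)
  next
    case 3
    then show ?thesis using assms e1_eq_0[of i] swap_small_crossing[OF first] by auto
  qed
qed (use assms in \<open>auto simp: swap_small_no_crossing split: if_splits\<close>)

lemma swap_large_nonzero_imp:
  assumes "swap_large P e1 e2 m i \<noteq> 0" shows "P i \<or> e2 i \<noteq> 0"
proof (cases rule: crossing_cases)
  case (1 c)
  note first = this
  consider "i < c" | "i = c" | "c < i" by linarith
  then show ?thesis
  proof cases
    case 1
    then show ?thesis using first_crossing_less[OF first] t_le_N P_iff[of i] by auto
  next
    case 2
    then show ?thesis using first by (simp add: crossing_def)
  next
    case 3
    then show ?thesis using assms swap_large_crossing[OF first] by auto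
  qed
qed (use assms in \<open>auto simp: swap_large_no_crossing split: if_splits\<close>)

lemma sum_swap_small_le: "(\<Sum>i<n. swap_small P e1 e2 m i) \<le> m"
proof (cases rule: crossing_cases)
  case (1 c)
  then show ?thesis using e1_budget[of n] e2_budget[of n] by (simp add: sum_swap_small_crossing[OF 1]; arith)
next
  case 2
  then show ?thesis using e2_budget[of "min n t"] by (simp add: sum_swap_small_no_crossing[OF 2])
qed

lemma sum_swap_large_le: "(\<Sum>i<n. swap_large P e1 e2 m i) \<le> Suc m"
proof (cases rule: crossing_cases)
  case (1 c)
  then show ?thesis using e1_budget[of n] e2_budget[of n] by (simp add: sum_swap_large_crossing[OF 1])
next
  case 2
  have "(\<Sum>j<t. e2 j) \<le> (\<Sum>j<n. e2 j)" if "t \<le> n" using that by (rule sum_lessThan_mono_nat)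
  then show ?thesis
    using sum_e1_le_sum_e2_no_crossing[OF 2] e1_budget[of n] e2_budget[of n]
    by (cases "n \<le> t") (simp_all add: sum_swap_large_no_crossing[OF 2] min_def)
qed

context
  fixes F :: "real \<Rightarrow> real"
  assumes convex: "strictly_convex_on {0..} F" and F0: "F 0 = 0"
begin

(* At the first crossing the two new sales have the same sum as the old ones and lie between them. *)
lemma swap_sale_costs_le:
  "F (real (swap_small P e1 e2 m i)) + F (real (swap_large P e1 e2 m i)) \<le> F (real (e1 i)) + F (real (e2 i))"
proof (cases rule: crossing_cases)
  case (1 c)
  show ?thesis
  proof (cases "i = c")
    case True
    have small: "swap_small P e1 e2 m i = (m - (\<Sum>j<c. e2 j)) - (Suc m - ((\<Sum>j<c. e1 j) + e1 c))"
      using True by (simp add: swap_small_crossing[OF 1] remaining_def)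
    have large: "swap_large P e1 e2 m i = (Suc m - (\<Sum>j<c. e1 j)) - (m - ((\<Sum>j<c. e2 j) + e2 c))"
      using True by (simp add: swap_large_crossing[OF 1] remaining_def)
    have "(\<Sum>j<c. e1 j) + e1 c \<le> Suc m" "(\<Sum>j<c. e2 j) + e2 c \<le> m"
      using e1_budget[of "Suc c"] e2_budget[of "Suc c"] by simp_all
    with first_crossing_remaining[OF 1]
    have "F (real ((m - (\<Sum>j<c. e2 j)) - (Suc m - ((\<Sum>j<c. e1 j) + e1 c))))
        + F (real ((Suc m - (\<Sum>j<c. e1 j)) - (m - ((\<Sum>j<c. e2 j) + e2 c))))
        \<le> F (real (e2 c)) + F (real (e1 c))"
      by (intro strictly_convex_on_exchange_nat[OF convex]) auto
    then show ?thesis unfolding small large using True by simp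
  next
    case False
    then show ?thesis by (cases "i < c") (simp_all add: swap_small_crossing[OF 1] swap_large_crossing[OF 1])
  qed
next
  case 2
  then show ?thesis using e1_eq_0[of i] F0 by (simp add: swap_small_no_crossing swap_large_no_crossing)
qed

lemma swap_terminal_costs_le:
  "F (real (remaining m (swap_small P e1 e2 m) N)) + F (real (remaining (Suc m) (swap_large P e1 e2 m) N))
     \<le> F (real (remaining (Suc m) e1 N)) + F (real (remaining m e2 N))"
proof (cases rule: crossing_cases)
  case (1 c)
  have "c < N" using first_crossing_less[OF 1] t_le_N by simp
  moreover have "1 \<le> (\<Sum>j<N. e1 j)"
    using first_crossing_remaining(1)[OF 1] e1_budget[of "Suc c"] sum_lessThan_mono_nat[of "Suc c" N e1] \<open>c < N\<close>
    by linarith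
  ultimately show ?thesis using e1_budget[of N] e2_budget[of N]
    by (simp add: remaining_def sum_swap_small_crossing[OF 1] sum_swap_large_crossing[OF 1] add.commute)
next
  case 2
  have "(\<Sum>j<t. e2 j) \<le> (\<Sum>j<N. e2 j)" using t_le_N by (rule sum_lessThan_mono_nat)
  then have "F (real (m - (\<Sum>j<t. e2 j))) + F (real (Suc m - ((\<Sum>j<t. e1 j) + ((\<Sum>j<N. e2 j) - (\<Sum>j<t. e2 j)))))
     \<le> F (real (m - (\<Sum>j<N. e2 j))) + F (real (Suc m - (\<Sum>j<t. e1 j)))"
    using sum_e1_le_sum_e2_no_crossing[OF 2] e2_budget[of N] e1_budget[of t]
    by (intro strictly_convex_on_exchange_nat[OF convex]) auto
  then show ?thesis using t_le_N sum_e1_eq_beyond[OF t_le_N]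
    by (simp add: remaining_def sum_swap_small_no_crossing[OF 2] sum_swap_large_no_crossing[OF 2] min_def add.commute)
qed

lemma swap_schedule_costs_le:
  "schedule_cost F m N (swap_small P e1 e2 m) + schedule_cost F (Suc m) N (swap_large P e1 e2 m)
     \<le> schedule_cost F (Suc m) N e1 + schedule_cost F m N e2"
proof -
  have "(\<Sum>i<N. F (real (swap_small P e1 e2 m i)) + F (real (swap_large P e1 e2 m i)))
      \<le> (\<Sum>i<N. F (real (e1 i)) + F (real (e2 i)))"
    by (intro sum_mono swap_sale_costs_le)
  then show ?thesis using swap_terminal_costs_le by (simp add: schedule_cost_def sum.distrib)
qed

end

end

section \<open>Admissible strategies and their costs\<close>

lemma prob_space_poisson_space: "lam > 0 \<Longrightarrow> prob_space (poisson_space lam)"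
  unfolding poisson_space_def by (intro prob_space_PiM prob_space_exponential_density)

lemma measurable_arrival[measurable]: "arrival i \<in> borel_measurable (poisson_space lam)"
  unfolding arrival_def poisson_space_def by measurable

lemma AE_poisson_space_nonneg:
  assumes "lam > 0"
  shows "AE \<omega> in poisson_space lam. \<forall>j. 0 \<le> \<omega> j"
  unfolding AE_all_countable
proof
  fix j :: nat
  have "AE x in density lborel (exponential_density lam). 0 \<le> x"
    by (subst AE_density) (auto simp: exponential_density_def)
  then show "AE \<omega> in poisson_space lam. 0 \<le> \<omega> j"
    unfolding poisson_space_def by (intro AE_PiM_component prob_space_exponential_density assms) auto
qed

lemma arrival_mono: "(\<And>j. 0 \<le> \<omega> j) \<Longrightarrow> j \<le> i \<Longrightarrow> arrival j \<omega> \<le> arrival i \<omega>"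
  unfolding arrival_def by (intro sum_mono2) auto

lemma arrival_cong: "(\<forall>j\<le>i. \<omega> j = \<omega>' j) \<Longrightarrow> arrival i \<omega> = arrival i \<omega>'"
  unfolding arrival_def by simp

lemma admissible_measurable:
  "d \<in> admissible lam k \<Longrightarrow> d i \<in> measurable (poisson_space lam) (count_space UNIV)"
  unfolding admissible_def by auto

lemma admissible_adapted: "d \<in> admissible lam k \<Longrightarrow> (\<forall>j\<le>i. \<omega> j = \<omega>' j) \<Longrightarrow> d i \<omega> = d i \<omega>'"
  unfolding admissible_def by blast

lemma admissible_budget: "d \<in> admissible lam k \<Longrightarrow> (\<Sum>i<n. d i \<omega>) \<le> k"
  unfolding admissible_def by blast

lemma admissible_zero: "(\<lambda>i \<omega>. 0) \<in> admissible lam k"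
  unfolding admissible_def by auto

definition sales_upto :: "real \<Rightarrow> (nat \<Rightarrow> (nat \<Rightarrow> real) \<Rightarrow> nat) \<Rightarrow> (nat \<Rightarrow> real) \<Rightarrow> nat \<Rightarrow> nat" where
  "sales_upto U d \<omega> i = (if arrival i \<omega> \<le> U then d i \<omega> else 0)"

lemma sales_upto_budget:
  assumes "d \<in> admissible lam k" shows "(\<Sum>i<n. sales_upto U d \<omega> i) \<le> k"
proof -
  have "(\<Sum>i<n. sales_upto U d \<omega> i) \<le> (\<Sum>i<n. d i \<omega>)" by (intro sum_mono) (simp add: sales_upto_def)
  also have "\<dots> \<le> k" using assms by (rule admissible_budget)
  finally show ?thesis .
qed

lemma sales_upto_cong:
  "d \<in> admissible lam k \<Longrightarrow> \<forall>j\<le>i. \<omega> j = \<omega>' j \<Longrightarrow> sales_upto U d \<omega> i = sales_upto U d \<omega>' i"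
  unfolding sales_upto_def using arrival_cong admissible_adapted by metis

lemma cost_eq_schedule_cost:
  assumes F0: "F 0 = 0" and vanish: "\<And>i. N \<le> i \<Longrightarrow> sales_upto U d \<omega> i = 0"
  shows "cost F k U d \<omega> = schedule_cost F k N (sales_upto U d \<omega>)"
proof -
  define J where "J = {i. arrival i \<omega> \<le> U \<and> d i \<omega> \<noteq> 0}"
  have "J \<subseteq> {..<N}"
  proof
    fix i assume "i \<in> J"
    then show "i \<in> {..<N}" using vanish[of i] by (cases "N \<le> i") (auto simp: J_def sales_upto_def)
  qed
  then have "(\<Sum>i\<in>J. F (real (d i \<omega>))) = (\<Sum>i<N. F (real (sales_upto U d \<omega> i)))"
    and "(\<Sum>i\<in>J. d i \<omega>) = (\<Sum>i<N. sales_upto U d \<omega> i)"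
    by (auto intro!: sum.mono_neutral_cong_left simp: J_def sales_upto_def F0 split: if_splits)
  then show ?thesis unfolding cost_def schedule_cost_def remaining_def Let_def J_def[symmetric] by simp
qed

lemma cost_eq_schedule_cost_eventually:
  assumes "d \<in> admissible lam k" "F 0 = 0"
  shows "\<forall>\<^sub>F N in sequentially. cost F k U d \<omega> = schedule_cost F k N (sales_upto U d \<omega>)"
proof -
  obtain N where vanish: "\<And>i. N \<le> i \<Longrightarrow> d i \<omega> = 0"
    using eventually_zero_if_sums_bounded admissible_budget[OF assms(1)] by metis
  show ?thesis
    using eventually_ge_at_top[of N]
    by (rule eventually_mono) (rule cost_eq_schedule_cost[where F=F, OF assms(2)], simp add: vanish sales_upto_def)
qed

lemma borel_measurable_cost:
  assumes d: "d \<in> admissible lam k" and F0: "F 0 = 0"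
  shows "cost F k U d \<in> borel_measurable (poisson_space lam)"
proof (rule borel_measurable_LIMSEQ_real)
  note [measurable] = admissible_measurable[OF d]
  show "(\<lambda>\<omega>. schedule_cost F k n (sales_upto U d \<omega>)) \<in> borel_measurable (poisson_space lam)" for n
    unfolding schedule_cost_def remaining_def sales_upto_def by measurable
  show "(\<lambda>n. schedule_cost F k n (sales_upto U d \<omega>)) \<longlonglongrightarrow> cost F k U d \<omega>" for \<omega>
    using cost_eq_schedule_cost_eventually[where F=F, OF d F0, of U \<omega>] by (simp add: tendsto_eventually eq_commute)
qed

lemma schedule_cost_bounds:
  fixes F :: "real \<Rightarrow> real"
  assumes nonneg: "\<forall>x\<ge>0. F x \<ge> 0" and mono: "strict_mono_on {0..} F" and F0: "F 0 = 0"
    and budget: "(\<Sum>i<N. e i) \<le> k"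
  shows "0 \<le> schedule_cost F k N e" "schedule_cost F k N e \<le> (real k + 1) * F (real k)"
proof -
  show "0 \<le> schedule_cost F k N e"
    unfolding schedule_cost_def using nonneg by (intro add_nonneg_nonneg sum_nonneg) auto
  have Fk: "0 \<le> F (real k)" using nonneg by simp
  have F_le: "F (real a) \<le> F (real b)" if "a \<le> b" for a b
    by (rule strict_mono_on_leD[OF mono]) (use that in auto)
  have sale: "F (real (e i)) \<le> real (e i) * F (real k)" if "i < N" for i
  proof (cases "e i = 0")
    case False
    have "e i \<le> k" using budget member_le_sum[of i "{..<N}" e] that by simp
    then have "F (real (e i)) \<le> F (real k)" by (rule F_le)
    also have "\<dots> \<le> real (e i) * F (real k)" using False Fk by (simp add: mult_le_cancel_right1)
    finally show ?thesis .
  qed (simp add: F0)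
  have "(\<Sum>i<N. F (real (e i))) \<le> (\<Sum>i<N. real (e i) * F (real k))" using sale by (intro sum_mono) simp
  also have "\<dots> = real (\<Sum>i<N. e i) * F (real k)" by (simp add: sum_distrib_right)
  also have "\<dots> \<le> real k * F (real k)" using budget Fk by (intro mult_right_mono) (simp_all flip: of_nat_sum)
  finally show "schedule_cost F k N e \<le> (real k + 1) * F (real k)"
    using F_le[of "remaining k e N" k] by (simp add: schedule_cost_def remaining_def algebra_simps)
qed

lemma cost_bounds:
  fixes F :: "real \<Rightarrow> real"
  assumes d: "d \<in> admissible lam k"
    and nonneg: "\<forall>x\<ge>0. F x \<ge> 0" and mono: "strict_mono_on {0..} F" and F0: "F 0 = 0"
  shows "0 \<le> cost F k U d \<omega>" "cost F k U d \<omega> \<le> (real k + 1) * F (real k)"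
proof -
  obtain N where "cost F k U d \<omega> = schedule_cost F k N (sales_upto U d \<omega>)"
    using cost_eq_schedule_cost_eventually[where F=F, OF d F0, of U \<omega>] by (meson eventually_sequentially order.refl)
  then show "0 \<le> cost F k U d \<omega>" "cost F k U d \<omega> \<le> (real k + 1) * F (real k)"
    using schedule_cost_bounds[OF nonneg mono F0 sales_upto_budget[OF d]] by simp_all
qed

lemma integrable_cost:
  fixes F :: "real \<Rightarrow> real"
  assumes lam: "lam > 0" and d: "d \<in> admissible lam k"
    and nonneg: "\<forall>x\<ge>0. F x \<ge> 0" and mono: "strict_mono_on {0..} F" and F0: "F 0 = 0"
  shows "integrable (poisson_space lam) (cost F k U d)"
proof -
  interpret prob_space "poisson_space lam" by (rule prob_space_poisson_space[OF lam])
  show ?thesis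
    using cost_bounds[OF d nonneg mono F0]
    by (intro integrable_const_bound[where B="(real k + 1) * F (real k)"] borel_measurable_cost[where F=F, OF d F0])
      auto
qed

(* The swapped schedules respect the budgets only on paths with nonnegative inter-arrival times;
   capping the cumulative sales makes the strategies admissible on every path and changes nothing
   almost surely (capped_eq). *)
definition capped :: "nat \<Rightarrow> (nat \<Rightarrow> nat) \<Rightarrow> nat \<Rightarrow> nat" where
  "capped k e i = min k (\<Sum>j<Suc i. e j) - min k (\<Sum>j<i. e j)"

lemma sum_capped: "(\<Sum>i<n. capped k e i) = min k (\<Sum>j<n. e j)"
proof (induction n)
  case (Suc n)
  have "min k (\<Sum>j<n. e j) \<le> min k (\<Sum>j<Suc n. e j)" by simp
  then show ?case using Suc by (simp add: capped_def)
qed simp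

lemma capped_eq: "(\<And>n. (\<Sum>j<n. e j) \<le> k) \<Longrightarrow> capped k e i = e i"
  using le_SucI by (simp add: capped_def) (metis lessThan_Suc_eq_insert_0 min.absorb2 sum.lessThan_Suc add_diff_cancel_left')

lemma capped_cong: "\<forall>j\<le>i. e j = e' j \<Longrightarrow> capped k e i = capped k e' i"
  unfolding capped_def by (metis (mono_tags, lifting) lessThan_iff less_Suc_eq_le less_imp_le sum.cong)

definition strategy_small ::
  "real \<Rightarrow> real \<Rightarrow> nat \<Rightarrow> (nat \<Rightarrow> (nat \<Rightarrow> real) \<Rightarrow> nat) \<Rightarrow> (nat \<Rightarrow> (nat \<Rightarrow> real) \<Rightarrow> nat) \<Rightarrow> nat \<Rightarrow> (nat \<Rightarrow> real) \<Rightarrow> nat"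
where
  "strategy_small T S m d1 d2 i \<omega> =
     capped m (swap_small (\<lambda>j. arrival j \<omega> \<le> T) (sales_upto T d1 \<omega>) (sales_upto S d2 \<omega>) m) i"

definition strategy_large ::
  "real \<Rightarrow> real \<Rightarrow> nat \<Rightarrow> (nat \<Rightarrow> (nat \<Rightarrow> real) \<Rightarrow> nat) \<Rightarrow> (nat \<Rightarrow> (nat \<Rightarrow> real) \<Rightarrow> nat) \<Rightarrow> nat \<Rightarrow> (nat \<Rightarrow> real) \<Rightarrow> nat"
where
  "strategy_large T S m d1 d2 i \<omega> =
     capped (Suc m) (swap_large (\<lambda>j. arrival j \<omega> \<le> T) (sales_upto T d1 \<omega>) (sales_upto S d2 \<omega>) m) i"

lemma swap_inputs_cong:
  assumes "d1 \<in> admissible lam k1" "d2 \<in> admissible lam k2" "\<forall>j\<le>i. \<omega> j = \<omega>' j" "l \<le> i"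
  shows "\<forall>j\<le>l. (arrival j \<omega> \<le> T) = (arrival j \<omega>' \<le> T)
     \<and> sales_upto T d1 \<omega> j = sales_upto T d1 \<omega>' j \<and> sales_upto S d2 \<omega> j = sales_upto S d2 \<omega>' j"
proof (intro allI impI conjI)
  fix j assume "j \<le> l"
  then have prefix: "\<forall>j'\<le>j. \<omega> j' = \<omega>' j'" using assms(3,4) by auto
  show "(arrival j \<omega> \<le> T) = (arrival j \<omega>' \<le> T)" using arrival_cong[OF prefix] by simp
  show "sales_upto T d1 \<omega> j = sales_upto T d1 \<omega>' j" by (rule sales_upto_cong[OF assms(1) prefix])
  show "sales_upto S d2 \<omega> j = sales_upto S d2 \<omega>' j" by (rule sales_upto_cong[OF assms(2) prefix])
qed

lemma strategy_small_admissible: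
  assumes d1: "d1 \<in> admissible lam (Suc m)" and d2: "d2 \<in> admissible lam m"
  shows "strategy_small T S m d1 d2 \<in> admissible lam m"
  unfolding admissible_def
proof (intro CollectI conjI allI impI)
  note [measurable] = admissible_measurable[OF d1] admissible_measurable[OF d2]
  show "strategy_small T S m d1 d2 i \<in> measurable (poisson_space lam) (count_space UNIV)" for i
    unfolding strategy_small_def capped_def swap_small_def crossing_def remaining_def sales_upto_def
    by measurable
  show "strategy_small T S m d1 d2 i \<omega> = strategy_small T S m d1 d2 i \<omega>'"
    if "\<forall>j\<le>i. \<omega> j = \<omega>' j" for i \<omega> \<omega>'
    unfolding strategy_small_def
    by (intro capped_cong allI impI swap_small_cong swap_inputs_cong[OF d1 d2 that])
  show "(\<Sum>i<n. strategy_small T S m d1 d2 i \<omega>) \<le> m" for \<omega> n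
    unfolding strategy_small_def sum_capped by simp
qed

lemma strategy_large_admissible:
  assumes d1: "d1 \<in> admissible lam (Suc m)" and d2: "d2 \<in> admissible lam m"
  shows "strategy_large T S m d1 d2 \<in> admissible lam (Suc m)"
  unfolding admissible_def
proof (intro CollectI conjI allI impI)
  note [measurable] = admissible_measurable[OF d1] admissible_measurable[OF d2]
  show "strategy_large T S m d1 d2 i \<in> measurable (poisson_space lam) (count_space UNIV)" for i
    unfolding strategy_large_def capped_def swap_large_def crossing_def remaining_def sales_upto_def
    by measurable
  show "strategy_large T S m d1 d2 i \<omega> = strategy_large T S m d1 d2 i \<omega>'"
    if "\<forall>j\<le>i. \<omega> j = \<omega>' j" for i \<omega> \<omega>'
    unfolding strategy_large_def
    by (intro capped_cong allI impI swap_large_cong swap_inputs_cong[OF d1 d2 that])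
  show "(\<Sum>i<n. strategy_large T S m d1 d2 i \<omega>) \<le> Suc m" for \<omega> n
    unfolding strategy_large_def sum_capped by simp
qed

lemma arrivals_initial_segment:
  assumes d1: "d1 \<in> admissible lam k1" and d2: "d2 \<in> admissible lam k2" and nonneg: "\<forall>j. 0 \<le> \<omega> j"
  obtains N t where "t \<le> N" "\<And>i. i < N \<Longrightarrow> arrival i \<omega> \<le> T \<longleftrightarrow> i < t"
    "\<And>i. \<not> arrival i \<omega> \<le> T \<or> N \<le> i \<Longrightarrow> sales_upto T d1 \<omega> i = 0"
    "\<And>i. N \<le> i \<Longrightarrow> sales_upto S d2 \<omega> i = 0"
proof -
  obtain N1 where N1: "\<And>i. N1 \<le> i \<Longrightarrow> d1 i \<omega> = 0"
    using eventually_zero_if_sums_bounded admissible_budget[OF d1] by metis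
  obtain N2 where N2: "\<And>i. N2 \<le> i \<Longrightarrow> d2 i \<omega> = 0"
    using eventually_zero_if_sums_bounded admissible_budget[OF d2] by metis
  have downclosed: "arrival j \<omega> \<le> T" if "j \<le> i" "arrival i \<omega> \<le> T" for i j
    using arrival_mono[of \<omega> j i] nonneg that by force
  have "\<exists>t\<le>max N1 N2. \<forall>i<max N1 N2. arrival i \<omega> \<le> T \<longleftrightarrow> i < t"
    by (rule downclosed_initial_segment) (rule downclosed)
  then obtain t where "t \<le> max N1 N2" "\<forall>i<max N1 N2. arrival i \<omega> \<le> T \<longleftrightarrow> i < t"
    by blast
  then show ?thesis using N1 N2 by (intro that[of t "max N1 N2"]) (auto simp: sales_upto_def)
qed

context
  fixes lam T S :: real and m N t :: nat and \<omega> :: "nat \<Rightarrow> real"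
    and d1 d2 :: "nat \<Rightarrow> (nat \<Rightarrow> real) \<Rightarrow> nat" and P :: "nat \<Rightarrow> bool" and e1 e2 :: "nat \<Rightarrow> nat"
  defines "P \<equiv> \<lambda>j. arrival j \<omega> \<le> T" and "e1 \<equiv> sales_upto T d1 \<omega>" and "e2 \<equiv> sales_upto S d2 \<omega>"
  assumes d1: "d1 \<in> admissible lam (Suc m)" and d2: "d2 \<in> admissible lam m" and "T \<le> S"
    and P_iff: "\<And>i. i < N \<Longrightarrow> P i \<longleftrightarrow> i < t" and t_le_N: "t \<le> N"
    and e1_eq_0: "\<And>i. \<not> P i \<or> N \<le> i \<Longrightarrow> e1 i = 0" and e2_eq_0: "\<And>i. N \<le> i \<Longrightarrow> e2 i = 0"
begin

lemma swap_hypotheses: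
  "\<And>i. i < N \<Longrightarrow> P i \<longleftrightarrow> i < t" "t \<le> N"
  "\<And>i. \<not> P i \<or> N \<le> i \<Longrightarrow> e1 i = 0" "\<And>i. N \<le> i \<Longrightarrow> e2 i = 0"
  "\<And>n. (\<Sum>j<n. e1 j) \<le> Suc m" "\<And>n. (\<Sum>j<n. e2 j) \<le> m"
  using P_iff t_le_N e1_eq_0 e2_eq_0 sales_upto_budget[OF d1] sales_upto_budget[OF d2]
  unfolding e1_def e2_def by auto

lemma sales_upto_strategy_small: "sales_upto T (strategy_small T S m d1 d2) \<omega> = swap_small P e1 e2 m"
proof
  fix i
  have "strategy_small T S m d1 d2 i \<omega> = swap_small P e1 e2 m i"
    unfolding strategy_small_def P_def[symmetric] e1_def[symmetric] e2_def[symmetric]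
    by (rule capped_eq) (rule sum_swap_small_le[OF swap_hypotheses])
  then show "sales_upto T (strategy_small T S m d1 d2) \<omega> i = swap_small P e1 e2 m i"
    using swap_small_nonzero_imp[OF swap_hypotheses, of i] by (auto simp: sales_upto_def P_def)
qed

lemma sales_upto_strategy_large: "sales_upto S (strategy_large T S m d1 d2) \<omega> = swap_large P e1 e2 m"
proof
  fix i
  have "strategy_large T S m d1 d2 i \<omega> = swap_large P e1 e2 m i"
    unfolding strategy_large_def P_def[symmetric] e1_def[symmetric] e2_def[symmetric]
    by (rule capped_eq) (rule sum_swap_large_le[OF swap_hypotheses])
  moreover have "arrival i \<omega> \<le> S" if "swap_large P e1 e2 m i \<noteq> 0"
  proof -
    have "P i \<or> e2 i \<noteq> 0" using swap_large_nonzero_imp[OF swap_hypotheses that] .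
    then show ?thesis using \<open>T \<le> S\<close> unfolding P_def e2_def sales_upto_def by (auto split: if_splits)
  qed
  ultimately show "sales_upto S (strategy_large T S m d1 d2) \<omega> i = swap_large P e1 e2 m i"
    by (auto simp: sales_upto_def)
qed

lemma cost_strategies_le:
  fixes F :: "real \<Rightarrow> real"
  assumes convex: "strictly_convex_on {0..} F" and F0: "F 0 = 0"
  shows "cost F m T (strategy_small T S m d1 d2) \<omega> + cost F (Suc m) S (strategy_large T S m d1 d2) \<omega>
     \<le> cost F (Suc m) T d1 \<omega> + cost F m S d2 \<omega>"
proof -
  have "cost F m T (strategy_small T S m d1 d2) \<omega> = schedule_cost F m N (swap_small P e1 e2 m)"
    by (subst cost_eq_schedule_cost[where F=F, OF F0])
      (auto simp: sales_upto_strategy_small intro: swap_small_eq_0_beyond[OF swap_hypotheses])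
  moreover have "cost F (Suc m) S (strategy_large T S m d1 d2) \<omega> = schedule_cost F (Suc m) N (swap_large P e1 e2 m)"
    by (subst cost_eq_schedule_cost[where F=F, OF F0])
      (auto simp: sales_upto_strategy_large intro: swap_large_eq_0_beyond[OF swap_hypotheses])
  moreover have "cost F (Suc m) T d1 \<omega> = schedule_cost F (Suc m) N e1"
    unfolding e1_def by (rule cost_eq_schedule_cost[where F=F, OF F0]) (use e2_eq_0 e1_eq_0 in \<open>simp add: e1_def\<close>)
  moreover have "cost F m S d2 \<omega> = schedule_cost F m N e2"
    unfolding e2_def by (rule cost_eq_schedule_cost[where F=F, OF F0]) (use e2_eq_0 in \<open>simp add: e2_def\<close>)
  ultimately show ?thesis using swap_schedule_costs_le[OF swap_hypotheses convex F0] by simp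
qed

end

lemma cost_exchange_le:
  fixes F :: "real \<Rightarrow> real"
  assumes "strictly_convex_on {0..} F" "F 0 = 0"
    and d1: "d1 \<in> admissible lam (Suc m)" and d2: "d2 \<in> admissible lam m"
    and "T \<le> S" and nonneg: "\<forall>j. 0 \<le> \<omega> j"
  shows "cost F m T (strategy_small T S m d1 d2) \<omega> + cost F (Suc m) S (strategy_large T S m d1 d2) \<omega>
     \<le> cost F (Suc m) T d1 \<omega> + cost F m S d2 \<omega>"
proof -
  obtain N t where "t \<le> N" "\<And>i. i < N \<Longrightarrow> arrival i \<omega> \<le> T \<longleftrightarrow> i < t"
    "\<And>i. \<not> arrival i \<omega> \<le> T \<or> N \<le> i \<Longrightarrow> sales_upto T d1 \<omega> i = 0"
    "\<And>i. N \<le> i \<Longrightarrow> sales_upto S d2 \<omega> i = 0"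
    by (rule arrivals_initial_segment[OF d1 d2 nonneg, where T=T and S=S]) blast
  then show ?thesis using cost_strategies_le[OF d1 d2 \<open>T \<le> S\<close>] assms(1,2) by blast
qed

section \<open>Submodularity of the value function\<close>

context
  fixes lam :: real and F :: "real \<Rightarrow> real"
  assumes lam: "lam > 0" and nonneg: "\<forall>x\<ge>0. F x \<ge> 0" and mono: "strict_mono_on {0..} F"
    and convex: "strictly_convex_on {0..} F" and F0: "F 0 = 0"
begin

lemma v_le_expected_cost:
  assumes "d \<in> admissible lam k"
  shows "v lam F k U \<le> integral\<^sup>L (poisson_space lam) (cost F k U d)"
  unfolding v_def
proof (rule cInf_lower)
  show "bdd_below {integral\<^sup>L (poisson_space lam) (cost F k U d) | d. d \<in> admissible lam k}"
    using cost_bounds(1)[OF _ nonneg mono F0] by (intro bdd_belowI[of _ 0]) (auto intro: integral_nonneg_AE)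
qed (use assms in blast)

lemma le_v:
  assumes "\<And>d. d \<in> admissible lam k \<Longrightarrow> c \<le> integral\<^sup>L (poisson_space lam) (cost F k U d)"
  shows "c \<le> v lam F k U"
  unfolding v_def using admissible_zero assms by (intro cInf_greatest) auto

lemma expected_cost_exchange_le:
  assumes d1: "d1 \<in> admissible lam (Suc m)" and d2: "d2 \<in> admissible lam m" and "T \<le> S"
  shows "integral\<^sup>L (poisson_space lam) (cost F m T (strategy_small T S m d1 d2))
       + integral\<^sup>L (poisson_space lam) (cost F (Suc m) S (strategy_large T S m d1 d2))
     \<le> integral\<^sup>L (poisson_space lam) (cost F (Suc m) T d1) + integral\<^sup>L (poisson_space lam) (cost F m S d2)"
proof -
  have integrable: "integrable (poisson_space lam) (cost F k U d)" if "d \<in> admissible lam k" for k U d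
    using integrable_cost[OF lam that nonneg mono F0] .
  have "AE \<omega> in poisson_space lam.
      cost F m T (strategy_small T S m d1 d2) \<omega> + cost F (Suc m) S (strategy_large T S m d1 d2) \<omega>
      \<le> cost F (Suc m) T d1 \<omega> + cost F m S d2 \<omega>"
    using AE_poisson_space_nonneg[OF lam]
    by eventually_elim (rule cost_exchange_le[OF convex F0 d1 d2 \<open>T \<le> S\<close>])
  then show ?thesis
    using d1 d2 strategy_small_admissible[OF d1 d2] strategy_large_admissible[OF d1 d2]
    by (subst (1 2) Bochner_Integration.integral_add[symmetric])
      (auto intro!: integral_mono_AE integrable)
qed

lemma v_submodular:
  assumes "T \<le> S"
  shows "v lam F m T + v lam F (Suc m) S \<le> v lam F (Suc m) T + v lam F m S"
proof -
  let ?E = "\<lambda>k U d. integral\<^sup>L (poisson_space lam) (cost F k U d)"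
  have "v lam F m T + v lam F (Suc m) S \<le> ?E (Suc m) T d1 + ?E m S d2"
    if d1: "d1 \<in> admissible lam (Suc m)" and d2: "d2 \<in> admissible lam m" for d1 d2
    using v_le_expected_cost[OF strategy_small_admissible[OF d1 d2, where T=T and S=S], where U=T]
      v_le_expected_cost[OF strategy_large_admissible[OF d1 d2, where T=T and S=S], where U=S]
      expected_cost_exchange_le[OF d1 d2 assms]
    by linarith
  then have "v lam F m T + v lam F (Suc m) S - ?E m S d2 \<le> v lam F (Suc m) T"
    if "d2 \<in> admissible lam m" for d2
    using that by (intro le_v) force
  then have "v lam F m T + v lam F (Suc m) S - v lam F (Suc m) T \<le> v lam F m S"
    by (intro le_v) (simp add: algebra_simps)
  then show ?thesis by linarith
qed

lemma v_horizon_gain_mono: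
  assumes "T \<le> S" and "i \<le> j"
  shows "v lam F i T - v lam F i S \<le> v lam F j T - v lam F j S"
  using \<open>i \<le> j\<close>
proof (induction j rule: dec_induct)
  case (step j)
  then show ?case using v_submodular[OF \<open>T \<le> S\<close>, of j] by linarith
qed simp

end

lemma Least_minimizer_le_if_diff_antimono:
  fixes f g :: "'a :: wellorder \<Rightarrow> 'b :: linordered_ab_group_add"
  assumes "finite A" "A \<noteq> {}"
    and diff: "\<And>a b. a \<in> A \<Longrightarrow> b \<in> A \<Longrightarrow> a \<le> b \<Longrightarrow> f b - g b \<le> f a - g a"
  shows "(LEAST a. a \<in> A \<and> (\<forall>b\<in>A. g a \<le> g b)) \<le> (LEAST a. a \<in> A \<and> (\<forall>b\<in>A. f a \<le> f b))"
proof -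
  define af where "af = (LEAST a. a \<in> A \<and> (\<forall>b\<in>A. f a \<le> f b))"
  define ag where "ag = (LEAST a. a \<in> A \<and> (\<forall>b\<in>A. g a \<le> g b))"
  have minimizer: "\<exists>a. a \<in> A \<and> (\<forall>b\<in>A. h a \<le> h b)" for h :: "'a \<Rightarrow> 'b"
    using arg_min_if_finite(1)[OF assms(1,2), of h] arg_min_least[OF assms(1,2)] by blast
  have af: "af \<in> A" "\<forall>b\<in>A. f af \<le> f b"
    using LeastI_ex[OF minimizer[of f]] unfolding af_def by simp_all
  have ag: "ag \<in> A" "\<forall>b\<in>A. g ag \<le> g b"
    using LeastI_ex[OF minimizer[of g]] unfolding ag_def by simp_all
  show "ag \<le> af" unfolding af_def[symmetric] ag_def[symmetric]
  proof (rule ccontr)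
    assume "\<not> ag \<le> af"
    then have "f ag - g ag \<le> f af - g af" using af(1) ag(1) diff by simp
    then have "f af - (f af - g af) \<le> f ag - (f ag - g ag)"
      using af(2) ag(1) by (intro diff_mono[of "f af"]) auto
    then have "\<forall>b\<in>A. g af \<le> g b" using ag(2) by (auto intro: order_trans)
    then have "ag \<le> af" unfolding ag_def using af(1) by (intro Least_le) blast
    with \<open>\<not> ag \<le> af\<close> show False ..
  qed
qed

theorem lemma2p11:
  fixes lam :: real and F :: "real \<Rightarrow> real" and S T :: real and k :: nat
  assumes "lam > 0"
    and "\<forall>x\<ge>0. F x \<ge> 0"
    and "strict_mono_on {0..} F"
    and "strictly_convex_on {0..} F"
    and "F 0 = 0"
    and "0 \<le> T" and "T < S"
    and "k \<ge> 1"
  shows "a_opt lam F k S \<le> a_opt lam F k T"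
proof -
  have "v lam F (k - b) T + F (real b) - (v lam F (k - b) S + F (real b))
      \<le> v lam F (k - a) T + F (real a) - (v lam F (k - a) S + F (real a))" if "a \<le> b" for a b
    using v_horizon_gain_mono[OF assms(1-5), of T S "k - b" "k - a"] \<open>T < S\<close> that by simp
  then show ?thesis
    unfolding a_opt_def using \<open>k \<ge> 1\<close> by (intro Least_minimizer_le_if_diff_antimono) auto
qed

end
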